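(* Let $X$ be a compact metric space and $f\colon X\to X$ continuous with $h_{\mathrm{top}}(f)<\infty$. Given $\eta,\phi\in C(X)$ and $Z\subset X$, suppose there exist $\alpha,\beta\in\mathbb{R}$ such that $$\alpha\le\liminf_{n\to\infty}\frac1nS_n\phi(x)\le\limsup_{n\to\infty}\frac1nS_n\phi(x)\le\beta$$ for every $x\in Z$. Then $P_Z(\eta)+\alpha t\le P_Z(\eta+t\phi)\le P_Z(\eta)+\beta t$ for all $t>0$.
   Context: $S_n\phi=\sum_{k=0}^{n-1}\phi\circ f^k$; $B(x,n,\delta)=\{y\mid d(f^kx,f^ky)<\delta,\ 0\le k\le n\}$. Pressure on a set $Z\subset X$: let $\mathcal{P}(Z,N,\delta)$ be the collection of countable sets $\{(x_i,n_i)\}\subset Z\times\{N,N+1,\dots\}$ with $Z\subset\bigcup_iB(x_i,n_i,\delta)$; $m_P(Z,s,\phi,\delta)=\lim_{N\to\infty}\inf_{\mathcal{P}(Z,N,\delta)}\sum_i\exp(-n_is+S_{n_i}\phi(x_i))$; $P_Z(\phi,\delta)=\inf\{s\mid m_P(Z,s,\phi,\delta)=0\}$; $P_Z(\phi)=\lim_{\delta\to0}P_Z(\phi,\delta)$; $P_\emptyset=-\infty$. *)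

theory Defs
  imports "HOL-Analysis.Analysis" "HOL-Library.Extended_Real" "HOL-Library.Extended_Nonnegative_Real"
begin

definition birkhoff_sum :: "('a \<Rightarrow> 'a) \<Rightarrow> ('a \<Rightarrow> real) \<Rightarrow> nat \<Rightarrow> 'a \<Rightarrow> real" where
  "birkhoff_sum f \<phi> n x = (\<Sum>k<n. \<phi> ((f ^^ k) x))"

definition bowen_ball :: "('a::metric_space \<Rightarrow> 'a) \<Rightarrow> 'a \<Rightarrow> nat \<Rightarrow> real \<Rightarrow> 'a set" where
  "bowen_ball f x n \<delta> = {y. \<forall>k\<le>n. dist ((f ^^ k) x) ((f ^^ k) y) < \<delta>}"

definition separated :: "('a::metric_space \<Rightarrow> 'a) \<Rightarrow> nat \<Rightarrow> real \<Rightarrow> 'a set \<Rightarrow> bool" where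
  "separated f n \<delta> E \<longleftrightarrow>
     (\<forall>x\<in>E. \<forall>y\<in>E. x \<noteq> y \<longrightarrow> (\<exists>k<n. dist ((f ^^ k) x) ((f ^^ k) y) > \<delta>))"

definition max_sep :: "('a::metric_space \<Rightarrow> 'a) \<Rightarrow> nat \<Rightarrow> real \<Rightarrow> nat" where
  "max_sep f n \<delta> = Sup {card E | E. finite E \<and> separated f n \<delta> E}"

definition htop :: "('a::metric_space \<Rightarrow> 'a) \<Rightarrow> ereal" where
  "htop f = Lim (at_right 0)
     (\<lambda>\<delta>. limsup (\<lambda>n. ereal (ln (real (max_sep f n \<delta>)) / real n)))"

definition covers :: "('a::metric_space \<Rightarrow> 'a) \<Rightarrow> 'a set \<Rightarrow> nat \<Rightarrow> real \<Rightarrow> ('a \<times> nat) set set" where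
  "covers f Z N \<delta> = {C. countable C \<and> C \<subseteq> Z \<times> {N..} \<and>
                        Z \<subseteq> (\<Union>(x,n)\<in>C. bowen_ball f x n \<delta>)}"

definition mP :: "('a::metric_space \<Rightarrow> 'a) \<Rightarrow> 'a set \<Rightarrow> real \<Rightarrow> ('a \<Rightarrow> real) \<Rightarrow> real \<Rightarrow> ennreal" where
  "mP f Z s \<phi> \<delta> = Lim sequentially (\<lambda>N.
      INF C\<in>covers f Z N \<delta>.
        (\<Sum>\<^sub>\<infinity> (x,n)\<in>C. ennreal (exp (- real n * s + birkhoff_sum f \<phi> n x))))"

text \<open>P_Z(phi,delta) = inf{s | m_P(Z,s,phi,delta) = 0}; with Inf {} = +infinity, and
  P_{empty} = -infinity comes out automatically (every s qualifies).\<close>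
definition pressure_delta :: "('a::metric_space \<Rightarrow> 'a) \<Rightarrow> 'a set \<Rightarrow> ('a \<Rightarrow> real) \<Rightarrow> real \<Rightarrow> ereal" where
  "pressure_delta f Z \<phi> \<delta> = Inf (ereal ` {s. mP f Z s \<phi> \<delta> = 0})"

definition pressure :: "('a::metric_space \<Rightarrow> 'a) \<Rightarrow> 'a set \<Rightarrow> ('a \<Rightarrow> real) \<Rightarrow> ereal" where
  "pressure f Z \<phi> = Lim (at_right 0) (\<lambda>\<delta>. pressure_delta f Z \<phi> \<delta>)"

end

theory Submission
  imports Defs
begin

text \<open>Fix \<open>\<epsilon> > 0\<close> and split \<open>Z\<close> into the countably many sets \<open>Z\<^sub>M\<close> of points with
  \<open>S\<^sub>n\<phi> \<le> n(\<beta> + \<epsilon>)\<close> for all \<open>n \<ge> M\<close>. A cover of \<open>Z\<close> by Bowen balls \<open>B(x,n,\<delta>)\<close> with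
  \<open>n \<ge> M\<close> can be recentred at points of \<open>Z\<^sub>M\<close> at the cost of doubling \<open>\<delta>\<close>. If \<open>\<eta>\<close>
  oscillates by at most \<open>c\<close> on \<open>\<delta>\<close>-balls, the weight of a recentred ball for \<open>\<eta> + t\<phi>\<close> at
  exponent \<open>s + t(\<beta> + \<epsilon>) + c\<close> is at most the weight of the original ball for \<open>\<eta>\<close> at
  exponent \<open>s\<close>. Countable subadditivity of the cover infimum over the \<open>Z\<^sub>M\<close> then gives
  \<open>P\<^sub>Z(\<eta> + t\<phi>, 2\<delta>) \<le> P\<^sub>Z(\<eta>, \<delta>) + t(\<beta> + \<epsilon>) + c\<close>, and \<open>c, \<epsilon> \<rightarrow> 0\<close> by uniform
  continuity. The lower bound is the upper bound applied to \<open>\<eta> + t\<phi>\<close> and \<open>-\<phi>\<close>.\<close>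

definition cover_weight :: "('a \<Rightarrow> 'a) \<Rightarrow> ('a \<Rightarrow> real) \<Rightarrow> real \<Rightarrow> 'a \<times> nat \<Rightarrow> ennreal" where
  "cover_weight f \<psi> s = (\<lambda>(x, n). ennreal (exp (- real n * s + birkhoff_sum f \<psi> n x)))"

definition cover_inf ::
    "('a::metric_space \<Rightarrow> 'a) \<Rightarrow> 'a set \<Rightarrow> nat \<Rightarrow> real \<Rightarrow> real \<Rightarrow> ('a \<Rightarrow> real) \<Rightarrow> ennreal" where
  "cover_inf f Z N \<delta> s \<psi> = (INF C\<in>covers f Z N \<delta>. infsum (cover_weight f \<psi> s) C)"

lemma infsum_image_le_ennreal:
  fixes g :: "'b \<Rightarrow> ennreal"
  shows "infsum g (h ` A) \<le> infsum (g \<circ> h) A"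
proof -
  have "sum g F \<le> infsum (g \<circ> h) A" if F: "finite F" "F \<subseteq> h ` A" for F
  proof -
    obtain F' where F': "F' \<subseteq> A" "finite F'" "F = h ` F'"
      using finite_subset_image[OF F] by blast
    have "sum g F \<le> sum (g \<circ> h) F'"
      unfolding F'(3) using F'(2) by (rule sum_image_le) simp
    also have "\<dots> \<le> infsum (g \<circ> h) A"
      unfolding comp_def nonneg_infsum_complete[of A "\<lambda>x. g (h x)", simplified]
      using F' by (intro SUP_upper) auto
    finally show ?thesis .
  qed
  then show ?thesis
    unfolding nonneg_infsum_complete[of "h ` A" g, simplified] by (intro SUP_least) auto
qed

lemma infsum_UN_le_suminf_ennreal:
  fixes g :: "'b \<Rightarrow> ennreal"
  shows "infsum g (\<Union>i. A i) \<le> (\<Sum>i. infsum g (A i))"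
proof -
  have "sum g F \<le> (\<Sum>i. infsum g (A i))" if F: "finite F" "F \<subseteq> (\<Union>i. A i)" for F
  proof -
    have "g x \<le> (\<Sum>i. if x \<in> A i then g x else 0)" if x: "x \<in> F" for x
    proof -
      obtain i where "x \<in> A i" using F x by blast
      then show ?thesis
        using sum_le_suminf[OF summableI, of "{i}" "\<lambda>i. if x \<in> A i then g x else 0"] by simp
    qed
    then have "sum g F \<le> (\<Sum>x\<in>F. \<Sum>i. if x \<in> A i then g x else 0)"
      by (rule sum_mono)
    also have "\<dots> = (\<Sum>i. sum g (F \<inter> A i))"
      by (simp add: suminf_sum sum.inter_restrict F(1))
    also have "\<dots> \<le> (\<Sum>i. infsum g (A i))"
      unfolding nonneg_infsum_complete[of "A _" g, simplified]
      using F(1) by (intro suminf_le SUP_upper) auto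
    finally show ?thesis .
  qed
  then show ?thesis
    unfolding nonneg_infsum_complete[of "\<Union>i. A i" g, simplified] by (intro SUP_least) auto
qed

lemma suminf_geometric_ennreal: "0 \<le> e \<Longrightarrow> (\<Sum>i. ennreal (e / 2 ^ Suc i)) = ennreal e"
proof -
  assume "0 \<le> e"
  have "(\<lambda>i. e / 2 ^ Suc i) sums e"
    using sums_mult[OF power_half_series, of e] by (simp add: power_one_over)
  with \<open>0 \<le> e\<close> show ?thesis
    by (simp add: suminf_ennreal2 sums_summable sums_unique[symmetric])
qed

lemma bowen_ball_mono: "\<delta> \<le> \<delta>' \<Longrightarrow> bowen_ball f x n \<delta> \<subseteq> bowen_ball f x n \<delta>'"
  by (force simp: bowen_ball_def)

lemma bowen_ball_recentre:
  assumes "y \<in> bowen_ball f x n \<delta>" and "z \<in> bowen_ball f x n \<delta>"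
  shows "z \<in> bowen_ball f y n (2 * \<delta>)"
  unfolding bowen_ball_def
proof (intro CollectI allI impI)
  fix k assume "k \<le> n"
  then have "dist ((f ^^ k) x) ((f ^^ k) y) < \<delta>" "dist ((f ^^ k) x) ((f ^^ k) z) < \<delta>"
    using assms by (auto simp: bowen_ball_def)
  then show "dist ((f ^^ k) y) ((f ^^ k) z) < 2 * \<delta>"
    using dist_triangle3[of "(f ^^ k) y" "(f ^^ k) z" "(f ^^ k) x"] by linarith
qed

lemma covers_antimono_level: "N \<le> N' \<Longrightarrow> covers f Z N' \<delta> \<subseteq> covers f Z N \<delta>"
  by (auto simp: covers_def)

lemma covers_mono_radius: "\<delta> \<le> \<delta>' \<Longrightarrow> covers f Z N \<delta> \<subseteq> covers f Z N \<delta>'"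
  unfolding covers_def using bowen_ball_mono by fastforce

lemma covers_UN:
  assumes "\<And>i::nat. C i \<in> covers f (Z i) N \<delta>"
  shows "(\<Union>i. C i) \<in> covers f (\<Union>i. Z i) N \<delta>"
  using assms by (fastforce simp: covers_def)

lemma covers_recentre:
  assumes C: "C \<in> covers f Z N \<delta>" and "Z' \<subseteq> Z"
  obtains C' g where "C' \<subseteq> C"
    and "\<And>p. p \<in> C' \<Longrightarrow> g p \<in> bowen_ball f (fst p) (snd p) \<delta> \<inter> Z'"
    and "(\<lambda>p. (g p, snd p)) ` C' \<in> covers f Z' N (2 * \<delta>)"
proof
  define C' where "C' = {p \<in> C. bowen_ball f (fst p) (snd p) \<delta> \<inter> Z' \<noteq> {}}"
  define g where "g p = (SOME y. y \<in> bowen_ball f (fst p) (snd p) \<delta> \<inter> Z')" for p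
  show "C' \<subseteq> C" by (auto simp: C'_def)
  show g: "g p \<in> bowen_ball f (fst p) (snd p) \<delta> \<inter> Z'" if "p \<in> C'" for p
    using that unfolding C'_def g_def by (metis (mono_tags, lifting) equals0I mem_Collect_eq someI_ex)
  have "Z' \<subseteq> (\<Union>(x, n)\<in>(\<lambda>p. (g p, snd p)) ` C'. bowen_ball f x n (2 * \<delta>))"
  proof
    fix z assume z: "z \<in> Z'"
    then obtain x n where xn: "(x, n) \<in> C" "z \<in> bowen_ball f x n \<delta>"
      using C \<open>Z' \<subseteq> Z\<close> by (auto simp: covers_def)
    then have "(x, n) \<in> C'" using z by (auto simp: C'_def)
    moreover have "z \<in> bowen_ball f (g (x, n)) n (2 * \<delta>)"
      using g[OF \<open>(x, n) \<in> C'\<close>] xn(2) by (auto intro: bowen_ball_recentre)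
    ultimately show "z \<in> (\<Union>(x, n)\<in>(\<lambda>p. (g p, snd p)) ` C'. bowen_ball f x n (2 * \<delta>))"
      by force
  qed
  moreover have "countable C'" "C' \<subseteq> Z \<times> {N..}"
    using C by (auto simp: covers_def C'_def intro: countable_subset)
  ultimately show "(\<lambda>p. (g p, snd p)) ` C' \<in> covers f Z' N (2 * \<delta>)"
    using g unfolding covers_def by fastforce
qed

lemma cover_inf_mono_level: "N \<le> N' \<Longrightarrow> cover_inf f Z N \<delta> s \<psi> \<le> cover_inf f Z N' \<delta> s \<psi>"
  unfolding cover_inf_def by (rule INF_superset_mono[OF covers_antimono_level]) auto

lemma cover_inf_antimono_radius: "\<delta> \<le> \<delta>' \<Longrightarrow> cover_inf f Z N \<delta>' s \<psi> \<le> cover_inf f Z N \<delta> s \<psi>"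
  unfolding cover_inf_def by (rule INF_superset_mono[OF covers_mono_radius]) auto

lemma cover_inf_UN_le:
  "cover_inf f (\<Union>i. Z i) N \<delta> s \<psi> \<le> (\<Sum>i. cover_inf f (Z i) N \<delta> s \<psi>)"
proof (rule ennreal_le_epsilon)
  fix e :: real
  assume fin: "(\<Sum>i. cover_inf f (Z i) N \<delta> s \<psi>) < top" and e: "0 < e"
  have "\<exists>C\<in>covers f (Z i) N \<delta>.
          infsum (cover_weight f \<psi> s) C < cover_inf f (Z i) N \<delta> s \<psi> + ennreal (e / 2 ^ Suc i)" for i
  proof -
    have "cover_inf f (Z i) N \<delta> s \<psi> < top" using fin by (rule ennreal_suminf_lessD)
    then have "cover_inf f (Z i) N \<delta> s \<psi> < cover_inf f (Z i) N \<delta> s \<psi> + ennreal (e / 2 ^ Suc i)"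
      using e by (simp add: ennreal_add_left_cancel_less)
    then show ?thesis by (subst (asm) (1) cover_inf_def) (simp add: INF_less_iff)
  qed
  then obtain C where C: "\<And>i. C i \<in> covers f (Z i) N \<delta>"
    and C_sum: "\<And>i. infsum (cover_weight f \<psi> s) (C i) < cover_inf f (Z i) N \<delta> s \<psi> + ennreal (e / 2 ^ Suc i)"
    by metis
  have "cover_inf f (\<Union>i. Z i) N \<delta> s \<psi> \<le> infsum (cover_weight f \<psi> s) (\<Union>i. C i)"
    unfolding cover_inf_def by (intro INF_lower covers_UN C)
  also have "\<dots> \<le> (\<Sum>i. infsum (cover_weight f \<psi> s) (C i))"
    by (rule infsum_UN_le_suminf_ennreal)
  also have "\<dots> \<le> (\<Sum>i. cover_inf f (Z i) N \<delta> s \<psi> + ennreal (e / 2 ^ Suc i))"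
    using C_sum by (intro suminf_le less_imp_le) auto
  also have "\<dots> = (\<Sum>i. cover_inf f (Z i) N \<delta> s \<psi>) + (\<Sum>i. ennreal (e / 2 ^ Suc i))"
    by (rule suminf_add[symmetric]) auto
  also have "\<dots> = (\<Sum>i. cover_inf f (Z i) N \<delta> s \<psi>) + ennreal e"
    using e by (simp only: suminf_geometric_ennreal less_imp_le)
  finally show "cover_inf f (\<Union>i. Z i) N \<delta> s \<psi> \<le> (\<Sum>i. cover_inf f (Z i) N \<delta> s \<psi>) + ennreal e" .
qed

lemma mP_eq_SUP_cover_inf: "mP f Z s \<psi> \<delta> = (SUP N. cover_inf f Z N \<delta> s \<psi>)"
proof -
  have "incseq (\<lambda>N. cover_inf f Z N \<delta> s \<psi>)" by (rule monoI) (rule cover_inf_mono_level)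
  then have "(\<lambda>N. cover_inf f Z N \<delta> s \<psi>) \<longlonglongrightarrow> (SUP N. cover_inf f Z N \<delta> s \<psi>)"
    by (rule LIMSEQ_SUP)
  then show ?thesis
    unfolding mP_def by (intro tendsto_Lim) (simp_all add: cover_inf_def cover_weight_def)
qed

lemma mP_eq_0_iff: "mP f Z s \<psi> \<delta> = 0 \<longleftrightarrow> (\<forall>N. cover_inf f Z N \<delta> s \<psi> = 0)"
  unfolding mP_eq_SUP_cover_inf by (simp add: bot_ennreal[symmetric])

lemma pressure_delta_antimono:
  assumes "\<delta> \<le> \<delta>'"
  shows "pressure_delta f Z \<psi> \<delta>' \<le> pressure_delta f Z \<psi> \<delta>"
proof -
  have "mP f Z s \<psi> \<delta>' = 0" if "mP f Z s \<psi> \<delta> = 0" for s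
    using that cover_inf_antimono_radius[OF assms, of f Z] unfolding mP_eq_0_iff by (metis le_zero_eq)
  then show ?thesis
    unfolding pressure_delta_def by (intro Inf_superset_mono image_mono) auto
qed

lemma pressure_delta_le_shift:
  assumes "\<And>s. mP f Z s \<psi> \<delta> = 0 \<Longrightarrow> mP f Z (s + c) \<psi>' \<delta>' = 0"
  shows "pressure_delta f Z \<psi>' \<delta>' \<le> pressure_delta f Z \<psi> \<delta> + ereal c"
proof -
  have "pressure_delta f Z \<psi>' \<delta>' - ereal c \<le> ereal s" if "mP f Z s \<psi> \<delta> = 0" for s
  proof -
    have "pressure_delta f Z \<psi>' \<delta>' \<le> ereal (s + c)"
      unfolding pressure_delta_def using assms[OF that] by (intro Inf_lower) auto
    then show ?thesis by (simp add: ereal_minus_le)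
  qed
  then have "pressure_delta f Z \<psi>' \<delta>' - ereal c \<le> pressure_delta f Z \<psi> \<delta>"
    unfolding pressure_delta_def[of f Z \<psi>] by (intro Inf_greatest) auto
  then show ?thesis by (simp add: ereal_minus_le)
qed

lemma tendsto_antimono_at_right:
  fixes g :: "real \<Rightarrow> 'b::{complete_linorder, linorder_topology}"
  assumes "\<And>a b. 0 < a \<Longrightarrow> a \<le> b \<Longrightarrow> g b \<le> g a"
  shows "(g \<longlongrightarrow> (SUP \<delta>\<in>{0<..}. g \<delta>)) (at_right 0)"
proof (rule increasing_tendsto)
  show "\<forall>\<^sub>F \<delta> in at_right 0. g \<delta> \<le> (SUP \<delta>\<in>{0<..}. g \<delta>)"
    using eventually_at_right_less[of "0::real"] by eventually_elim (auto intro: SUP_upper)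
next
  fix a assume "a < (SUP \<delta>\<in>{0<..}. g \<delta>)"
  then obtain d where d: "0 < d" "a < g d" by (auto simp: less_SUP_iff)
  then show "\<forall>\<^sub>F \<delta> in at_right 0. a < g \<delta>"
    unfolding eventually_at_right_field using assms by (force intro: less_le_trans)
qed

lemma pressure_eq_SUP: "pressure f Z \<psi> = (SUP \<delta>\<in>{0<..}. pressure_delta f Z \<psi> \<delta>)"
  unfolding pressure_def by (intro tendsto_Lim tendsto_antimono_at_right pressure_delta_antimono) auto

lemma birkhoff_sum_add_scaled:
  "birkhoff_sum f (\<lambda>x. \<eta> x + t * \<phi> x) n x = birkhoff_sum f \<eta> n x + t * birkhoff_sum f \<phi> n x"
  by (simp add: birkhoff_sum_def sum.distrib sum_distrib_left)

lemma birkhoff_sum_uminus: "birkhoff_sum f (\<lambda>x. - \<phi> x) n x = - birkhoff_sum f \<phi> n x"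
  by (simp add: birkhoff_sum_def sum_negf)

lemma birkhoff_sum_bowen_ball_le:
  assumes osc: "\<And>x y. dist x y < \<delta> \<Longrightarrow> \<eta> y - \<eta> x \<le> c"
    and "y \<in> bowen_ball f x n \<delta>"
  shows "birkhoff_sum f \<eta> n y \<le> birkhoff_sum f \<eta> n x + real n * c"
proof -
  have "birkhoff_sum f \<eta> n y - birkhoff_sum f \<eta> n x = (\<Sum>k<n. \<eta> ((f ^^ k) y) - \<eta> ((f ^^ k) x))"
    by (simp add: birkhoff_sum_def sum_subtractf)
  also have "\<dots> \<le> (\<Sum>k<n. c)"
    using assms(2) by (intro sum_mono osc) (auto simp: bowen_ball_def)
  finally show ?thesis by simp
qed

lemma eventually_birkhoff_sum_le:
  assumes "limsup (\<lambda>n. ereal (birkhoff_sum f \<phi> n x / real n)) \<le> ereal \<beta>" and "0 < \<epsilon>"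
  shows "eventually (\<lambda>n. birkhoff_sum f \<phi> n x \<le> real n * (\<beta> + \<epsilon>)) sequentially"
proof -
  have "limsup (\<lambda>n. ereal (birkhoff_sum f \<phi> n x / real n)) < ereal (\<beta> + \<epsilon>)"
    using assms by (simp add: le_less_trans)
  then have "eventually (\<lambda>n. birkhoff_sum f \<phi> n x / real n < \<beta> + \<epsilon>) sequentially"
    by (auto dest: Limsup_lessD)
  then show ?thesis
  proof eventually_elim
    case (elim n)
    then show ?case
      by (cases "n = 0") (simp_all add: birkhoff_sum_def pos_divide_less_eq mult.commute)
  qed
qed

lemma cover_inf_recentre_le:
  assumes osc: "\<And>x y. dist x y < \<delta> \<Longrightarrow> \<eta> y - \<eta> x \<le> c"
    and "Z' \<subseteq> Z"
    and bound: "\<And>x n. x \<in> Z' \<Longrightarrow> M \<le> n \<Longrightarrow> birkhoff_sum f \<phi> n x \<le> real n * b"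
    and "0 \<le> t" and "M \<le> N"
  shows "cover_inf f Z' N (2 * \<delta>) (s + (t * b + c)) (\<lambda>x. \<eta> x + t * \<phi> x) \<le> cover_inf f Z N \<delta> s \<eta>"
  unfolding cover_inf_def[of f Z]
proof (rule INF_greatest)
  fix C assume C: "C \<in> covers f Z N \<delta>"
  obtain C' g where "C' \<subseteq> C"
    and g: "\<And>p. p \<in> C' \<Longrightarrow> g p \<in> bowen_ball f (fst p) (snd p) \<delta> \<inter> Z'"
    and C'_covers: "(\<lambda>p. (g p, snd p)) ` C' \<in> covers f Z' N (2 * \<delta>)"
    using covers_recentre[OF C \<open>Z' \<subseteq> Z\<close>] by blast
  let ?w' = "cover_weight f (\<lambda>x. \<eta> x + t * \<phi> x) (s + (t * b + c))"
  let ?w = "cover_weight f \<eta> s"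
  have weight_le: "?w' (g p, snd p) \<le> ?w p" if "p \<in> C'" for p
  proof -
    obtain x n where p: "p = (x, n)" by (cases p)
    have "N \<le> n" using C \<open>C' \<subseteq> C\<close> \<open>p \<in> C'\<close> p by (auto simp: covers_def)
    have "birkhoff_sum f \<eta> n (g p) \<le> birkhoff_sum f \<eta> n x + real n * c"
      using g[OF that] p by (intro birkhoff_sum_bowen_ball_le[OF osc]) auto
    moreover have "t * birkhoff_sum f \<phi> n (g p) \<le> t * (real n * b)"
      using g[OF that] bound \<open>0 \<le> t\<close> \<open>M \<le> N\<close> \<open>N \<le> n\<close> by (intro mult_left_mono) auto
    ultimately show ?thesis
      unfolding p cover_weight_def by (auto simp: birkhoff_sum_add_scaled algebra_simps intro!: ennreal_leI)
  qed
  have "cover_inf f Z' N (2 * \<delta>) (s + (t * b + c)) (\<lambda>x. \<eta> x + t * \<phi> x)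
      \<le> infsum ?w' ((\<lambda>p. (g p, snd p)) ` C')"
    unfolding cover_inf_def using C'_covers by (rule INF_lower)
  also have "\<dots> \<le> infsum (?w' \<circ> (\<lambda>p. (g p, snd p))) C'"
    by (rule infsum_image_le_ennreal)
  also have "\<dots> \<le> infsum ?w C'"
    using weight_le by (intro infsum_mono nonneg_summable_on_complete) auto
  also have "\<dots> \<le> infsum ?w C"
    using \<open>C' \<subseteq> C\<close> by (intro infsum_mono_neutral nonneg_summable_on_complete) auto
  finally show "cover_inf f Z' N (2 * \<delta>) (s + (t * b + c)) (\<lambda>x. \<eta> x + t * \<phi> x) \<le> infsum ?w C" .
qed

lemma pressure_delta_add_le:
  assumes osc: "\<And>x y. dist x y < \<delta> \<Longrightarrow> \<eta> y - \<eta> x \<le> c" and "0 \<le> t"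
    and bound: "\<And>x. x \<in> Z \<Longrightarrow> eventually (\<lambda>n. birkhoff_sum f \<phi> n x \<le> real n * b) sequentially"
  shows "pressure_delta f Z (\<lambda>x. \<eta> x + t * \<phi> x) (2 * \<delta>) \<le> pressure_delta f Z \<eta> \<delta> + ereal (t * b + c)"
proof (rule pressure_delta_le_shift)
  define Z' where "Z' M = {x \<in> Z. \<forall>n\<ge>M. birkhoff_sum f \<phi> n x \<le> real n * b}" for M
  have Z_eq: "Z = (\<Union>M. Z' M)"
    using bound by (auto simp: Z'_def eventually_sequentially)
  fix s assume "mP f Z s \<eta> \<delta> = 0"
  then have Z_null: "cover_inf f Z N \<delta> s \<eta> = 0" for N
    by (simp add: mP_eq_0_iff)
  have Z'_null: "cover_inf f (Z' M) N (2 * \<delta>) (s + (t * b + c)) (\<lambda>x. \<eta> x + t * \<phi> x) = 0" for M N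
  proof -
    have "cover_inf f (Z' M) N (2 * \<delta>) (s + (t * b + c)) (\<lambda>x. \<eta> x + t * \<phi> x)
        \<le> cover_inf f (Z' M) (max N M) (2 * \<delta>) (s + (t * b + c)) (\<lambda>x. \<eta> x + t * \<phi> x)"
      by (rule cover_inf_mono_level) simp
    also have "\<dots> \<le> cover_inf f Z (max N M) \<delta> s \<eta>"
      by (rule cover_inf_recentre_le[OF osc _ _ \<open>0 \<le> t\<close>]) (auto simp: Z'_def)
    finally show ?thesis using Z_null by simp
  qed
  have "cover_inf f Z N (2 * \<delta>) (s + (t * b + c)) (\<lambda>x. \<eta> x + t * \<phi> x)
      \<le> (\<Sum>M. cover_inf f (Z' M) N (2 * \<delta>) (s + (t * b + c)) (\<lambda>x. \<eta> x + t * \<phi> x))" for N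
    by (subst Z_eq) (rule cover_inf_UN_le)
  then have "cover_inf f Z N (2 * \<delta>) (s + (t * b + c)) (\<lambda>x. \<eta> x + t * \<phi> x) = 0" for N
    by (simp add: Z'_null)
  then show "mP f Z (s + (t * b + c)) (\<lambda>x. \<eta> x + t * \<phi> x) (2 * \<delta>) = 0"
    by (simp add: mP_eq_0_iff)
qed

lemma compact_uniform_oscillation:
  fixes \<eta> :: "'a::metric_space \<Rightarrow> real"
  assumes "compact (UNIV :: 'a set)" and "continuous_on UNIV \<eta>" and "0 < e"
  obtains d where "0 < d" and "\<And>x y. dist x y < d \<Longrightarrow> \<eta> y - \<eta> x \<le> e"
proof -
  have "uniformly_continuous_on UNIV \<eta>"
    using compact_uniformly_continuous[OF assms(2,1)] .
  then obtain d where "0 < d" and d: "\<And>x y. dist y x < d \<Longrightarrow> dist (\<eta> y) (\<eta> x) < e"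
    using \<open>0 < e\<close> unfolding uniformly_continuous_on_def by blast
  have "\<eta> y - \<eta> x \<le> e" if "dist x y < d" for x y
    using d[of y x] that by (simp add: dist_commute dist_real_def)
  with \<open>0 < d\<close> show thesis by (rule that)
qed

lemma pressure_add_le:
  fixes f :: "'a::metric_space \<Rightarrow> 'a" and \<eta> \<phi> :: "'a \<Rightarrow> real"
  assumes "compact (UNIV :: 'a set)" and "continuous_on UNIV \<eta>" and "0 < t"
    and limsup_le: "\<And>x. x \<in> Z \<Longrightarrow> limsup (\<lambda>n. ereal (birkhoff_sum f \<phi> n x / real n)) \<le> ereal \<beta>"
  shows "pressure f Z (\<lambda>x. \<eta> x + t * \<phi> x) \<le> pressure f Z \<eta> + ereal (\<beta> * t)"
proof (rule ereal_le_epsilon2)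
  fix e :: real assume "0 < e"
  obtain d0 where "0 < d0" and osc: "\<And>x y. dist x y < d0 \<Longrightarrow> \<eta> y - \<eta> x \<le> e / 2"
    using compact_uniform_oscillation[OF assms(1,2), of "e / 2"] \<open>0 < e\<close> by auto
  define b where "b = \<beta> + e / (2 * t)"
  have bound: "eventually (\<lambda>n. birkhoff_sum f \<phi> n x \<le> real n * b) sequentially" if "x \<in> Z" for x
    unfolding b_def using \<open>0 < e\<close> \<open>0 < t\<close> by (intro eventually_birkhoff_sum_le limsup_le that) simp
  have shift_eq: "t * b + e / 2 = \<beta> * t + e"
    unfolding b_def using \<open>0 < t\<close> by (simp add: field_simps)
  have "pressure_delta f Z (\<lambda>x. \<eta> x + t * \<phi> x) \<delta> \<le> pressure f Z \<eta> + ereal (\<beta> * t + e)"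
    if "0 < \<delta>" for \<delta>
  proof -
    define d where "d = min (\<delta> / 2) d0"
    have "0 < d" "d \<le> d0" "2 * d \<le> \<delta>" using \<open>0 < \<delta>\<close> \<open>0 < d0\<close> by (auto simp: d_def)
    have "pressure_delta f Z (\<lambda>x. \<eta> x + t * \<phi> x) \<delta>
        \<le> pressure_delta f Z (\<lambda>x. \<eta> x + t * \<phi> x) (2 * d)"
      using \<open>2 * d \<le> \<delta>\<close> by (rule pressure_delta_antimono)
    also have "\<dots> \<le> pressure_delta f Z \<eta> d + ereal (t * b + e / 2)"
      using \<open>d \<le> d0\<close> \<open>0 < t\<close> bound by (intro pressure_delta_add_le osc) auto
    also have "\<dots> \<le> pressure f Z \<eta> + ereal (t * b + e / 2)"
      unfolding pressure_eq_SUP[of f Z \<eta>] using \<open>0 < d\<close> by (intro add_right_mono SUP_upper) auto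
    finally show ?thesis by (simp only: shift_eq)
  qed
  then have "pressure f Z (\<lambda>x. \<eta> x + t * \<phi> x) \<le> pressure f Z \<eta> + ereal (\<beta> * t + e)"
    unfolding pressure_eq_SUP[of f Z "\<lambda>x. \<eta> x + t * \<phi> x"] by (intro SUP_least) auto
  then show "pressure f Z (\<lambda>x. \<eta> x + t * \<phi> x) \<le> pressure f Z \<eta> + ereal (\<beta> * t) + ereal e"
    by (simp add: add.assoc)
qed

theorem lemma4p8:
  fixes f :: "'a::metric_space \<Rightarrow> 'a" and \<eta> \<phi> :: "'a \<Rightarrow> real"
    and Z :: "'a set" and \<alpha> \<beta> :: real
  assumes "compact (UNIV :: 'a set)"
    and "continuous_on UNIV f"
    and "htop f < \<infinity>"
    and "continuous_on UNIV \<eta>" and "continuous_on UNIV \<phi>"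
    and "\<And>x. x \<in> Z \<Longrightarrow>
           ereal \<alpha> \<le> liminf (\<lambda>n. ereal (birkhoff_sum f \<phi> n x / real n))"
    and "\<And>x. x \<in> Z \<Longrightarrow>
           limsup (\<lambda>n. ereal (birkhoff_sum f \<phi> n x / real n)) \<le> ereal \<beta>"
  shows "\<forall>t>0.
           pressure f Z \<eta> + ereal (\<alpha> * t) \<le> pressure f Z (\<lambda>x. \<eta> x + t * \<phi> x) \<and>
           pressure f Z (\<lambda>x. \<eta> x + t * \<phi> x) \<le> pressure f Z \<eta> + ereal (\<beta> * t)"
proof (intro allI impI conjI)
  fix t :: real assume "0 < t"
  show "pressure f Z (\<lambda>x. \<eta> x + t * \<phi> x) \<le> pressure f Z \<eta> + ereal (\<beta> * t)"
    by (rule pressure_add_le[OF assms(1,4) \<open>0 < t\<close> assms(7)])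
  have "limsup (\<lambda>n. ereal (birkhoff_sum f (\<lambda>x. - \<phi> x) n x / real n)) \<le> ereal (- \<alpha>)" if "x \<in> Z" for x
  proof -
    have "limsup (\<lambda>n. ereal (birkhoff_sum f (\<lambda>x. - \<phi> x) n x / real n))
        = - liminf (\<lambda>n. ereal (birkhoff_sum f \<phi> n x / real n))"
      unfolding birkhoff_sum_uminus minus_divide_left[symmetric] uminus_ereal.simps(1)[symmetric]
      by (rule ereal_Limsup_uminus)
    then show ?thesis using assms(6)[OF that] by (simp add: ereal_uminus_le_reorder)
  qed
  then have "pressure f Z (\<lambda>x. (\<eta> x + t * \<phi> x) + t * - \<phi> x)
      \<le> pressure f Z (\<lambda>x. \<eta> x + t * \<phi> x) + ereal (- \<alpha> * t)"
    using assms(1,4,5) \<open>0 < t\<close> by (intro pressure_add_le continuous_intros) auto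
  then show "pressure f Z \<eta> + ereal (\<alpha> * t) \<le> pressure f Z (\<lambda>x. \<eta> x + t * \<phi> x)"
    by (cases "pressure f Z \<eta>"; cases "pressure f Z (\<lambda>x. \<eta> x + t * \<phi> x)") auto
qed

end
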